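(* There is no class $\mathcal C$ of pWF nets satisfying all three of the following: (1) every sub-sound pWF net belongs to $\mathcal C$, and $\mathcal C$ contains at least one pWF net that is not sub-sound; (2) every net in $\mathcal C$ is $1$-sound; (3) $\mathcal C$ is preserved by substitution, i.e. whenever $N,M\in\mathcal C$ have disjoint node sets and $p$ is a place of $N$, then $N\otimes_p M\in\mathcal C$.
   Context: Petri nets and markings. A Petri net is a triple $(P,T,F)$ with $P$ a finite set of places, $T$ a finite set of transitions, $P\cap T=\emptyset$, and $F\subseteq (P\times T)\cup(T\times P)$. For a node $x$, $\bullet x=\{y\mid (y,x)\in F\}$, $x\bullet=\{y\mid (x,y)\in F\}$. A marking is a multiset over $P$ (a function $P\to\mathbb N$); sets of places are identified with bags of multiplicity one, $+,-,\le$ are pointwise, and $k.m$ is the sum of $k$ copies of $m$. Transition $t$ is enabled at $m$ iff $\bullet t\le m$, firing gives $m-\bullet t+t\bullet$, and $m\xrightarrow{*}m'$ denotes reachability by a finite (possibly empty) firing sequence. A pWF net is $(P,T,F,I,O)$ with $(P,T,F)$ a Petri net, $I,O\subseteq P$ non-empty (input/output places), every node reachable by a directed path from some node of $I$, and some node of $O$ reachable from every node; input places may have incoming edges and output places outgoing edges. Soundness. A pWF net is $k$-sound if for every marking $m$ with $k.I\xrightarrow{*}m$ we have $m\xrightarrow{*}k.O$. It is substitution-sound (sub-sound) if for all integers $k\ge k'\ge 0$ and every marking $m'$: if $k.I\xrightarrow{*}m'+k'.O$ then $m'\xrightarrow{*}(k-k').O$. Place substitution. For pWF nets $N=(P,T,F,I,O)$,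 $M=(P',T',F',I',O')$ with disjoint node sets and $p\in P$, $N\otimes_p M$ is obtained from $N$ by deleting $p$ and all edges incident to $p$, adding all nodes and edges of $M$, adding an edge $(t,p')$ for each $t\in\bullet_N p$ and $p'\in I'$, and an edge $(p',t)$ for each $p'\in O'$ and $t\in p\bullet_N$; its input set is $(I\setminus\{p\})\cup I'$ if $p\in I$ and $I$ otherwise, and its output set is $(O\setminus\{p\})\cup O'$ if $p\in O$ and $O$ otherwise. *)

theory Defs
  imports Main "HOL-Library.Multiset"
begin

record 'a pnet =
  places :: "'a set"
  trans  :: "'a set"
  flow   :: "('a \<times> 'a) set"
  inp    :: "'a set"
  outp   :: "'a set"

definition petri_net :: "'a pnet \<Rightarrow> bool" where
  "petri_net N \<longleftrightarrow> finite (places N) \<and> finite (trans N) \<and>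
     places N \<inter> trans N = {} \<and>
     flow N \<subseteq> (places N \<times> trans N) \<union> (trans N \<times> places N)"

definition nodes :: "'a pnet \<Rightarrow> 'a set" where
  "nodes N = places N \<union> trans N"

definition pWF :: "'a pnet \<Rightarrow> bool" where
  "pWF N \<longleftrightarrow> petri_net N \<and>
     inp N \<subseteq> places N \<and> outp N \<subseteq> places N \<and> inp N \<noteq> {} \<and> outp N \<noteq> {} \<and>
     (\<forall>x \<in> nodes N. \<exists>i \<in> inp N. (i, x) \<in> (flow N)\<^sup>*) \<and>
     (\<forall>x \<in> nodes N. \<exists>q \<in> outp N. (x, q) \<in> (flow N)\<^sup>*)"

definition preset :: "'a pnet \<Rightarrow> 'a \<Rightarrow> 'a set" where
  "preset N x = {y. (y, x) \<in> flow N}"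

definition postset :: "'a pnet \<Rightarrow> 'a \<Rightarrow> 'a set" where
  "postset N x = {y. (x, y) \<in> flow N}"

text \<open>Markings are multisets of nodes; sets are bags of multiplicity one.\<close>
definition fire_step :: "'a pnet \<Rightarrow> 'a multiset \<Rightarrow> 'a multiset \<Rightarrow> bool" where
  "fire_step N m m' \<longleftrightarrow> (\<exists>t \<in> trans N. mset_set (preset N t) \<subseteq># m \<and>
      m' = m - mset_set (preset N t) + mset_set (postset N t))"

definition reach :: "'a pnet \<Rightarrow> 'a multiset \<Rightarrow> 'a multiset \<Rightarrow> bool" where
  "reach N = (fire_step N)\<^sup>*\<^sup>*"

definition k_sound :: "nat \<Rightarrow> 'a pnet \<Rightarrow> bool" where
  "k_sound k N \<longleftrightarrow> (\<forall>m. reach N (repeat_mset k (mset_set (inp N))) m \<longrightarrow>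
       reach N m (repeat_mset k (mset_set (outp N))))"

definition sub_sound :: "'a pnet \<Rightarrow> bool" where
  "sub_sound N \<longleftrightarrow> (\<forall>k k' m'. k' \<le> k \<longrightarrow>
      reach N (repeat_mset k (mset_set (inp N))) (m' + repeat_mset k' (mset_set (outp N))) \<longrightarrow>
      reach N m' (repeat_mset (k - k') (mset_set (outp N))))"

definition subst_place :: "'a pnet \<Rightarrow> 'a \<Rightarrow> 'a pnet \<Rightarrow> 'a pnet" where
  "subst_place N p M =
    \<lparr> places = (places N - {p}) \<union> places M,
      trans = trans N \<union> trans M,
      flow = {e \<in> flow N. fst e \<noteq> p \<and> snd e \<noteq> p} \<union> flow M
             \<union> {(t, q). t \<in> preset N p \<and> q \<in> inp M}
             \<union> {(q, t). q \<in> outp M \<and> t \<in> postset N p},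
      inp = (if p \<in> inp N then (inp N - {p}) \<union> inp M else inp N),
      outp = (if p \<in> outp N then (outp N - {p}) \<union> outp M else outp N) \<rparr>"

end

theory Submission
  imports Defs
begin

text \<open>
  Let N be a net of the class that is not substitution-sound: k.I reaches m' + k'.O, but
  m' cannot reach (k - k').O. The net chain below is a path q_0 -> tr_0 -> q_1 -> ... -> q_2k
  whose transitions tr_0, ..., tr_(k-1) also put a token on a buffer place buf and whose
  transitions tr_k, ..., tr_(2k-1) also take one from it; it is sub-sound. After substituting
  N for buf, a single token on q_0 produces k.I, N runs to m' + k'.O, and k' chain steps
  consume k'.O, leaving m' + q_(k+k'). From there the chain token advances only by consuming
  copies of O that N produces from m', so q_2k is reachable only if m' reaches (k - k').O.
  Hence the substituted net, which closure under substitution puts into the class, is not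
  1-sound.
\<close>

lemma reach_refl [simp]: "reach N m m"
  by (simp add: reach_def)

lemma reach_trans [trans]: "reach N a b \<Longrightarrow> reach N b c \<Longrightarrow> reach N a c"
  unfolding reach_def by (rule rtranclp_trans)

lemma fire_step_reach: "fire_step N a b \<Longrightarrow> reach N a b"
  unfolding reach_def by (rule r_into_rtranclp)

lemma reach_fire_step: "reach N a b \<Longrightarrow> fire_step N b c \<Longrightarrow> reach N a c"
  unfolding reach_def by (rule rtranclp.rtrancl_into_rtrancl)

lemma reach_induct [consumes 1, case_names base step]:
  "reach N a b \<Longrightarrow> P a \<Longrightarrow> (\<And>y z. reach N a y \<Longrightarrow> fire_step N y z \<Longrightarrow> P y \<Longrightarrow> P z) \<Longrightarrow> P b"
  unfolding reach_def by (induction rule: rtranclp_induct) auto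

lemma fire_step_add:
  assumes "fire_step N a b"
  shows "fire_step N (a + c) (b + c)"
proof -
  obtain t where t: "t \<in> trans N" "mset_set (preset N t) \<subseteq># a"
    "b = a - mset_set (preset N t) + mset_set (postset N t)"
    using assms unfolding fire_step_def by blast
  have "mset_set (preset N t) \<subseteq># a + c"
    using t(2) by (rule subset_mset.order_trans) simp
  moreover have "b + c = a + c - mset_set (preset N t) + mset_set (postset N t)"
    using t(2,3) by (metis subset_mset.diff_add_assoc2 union_commute union_assoc)
  ultimately show ?thesis using t(1) unfolding fire_step_def by blast
qed

lemma reach_add: "reach N a b \<Longrightarrow> reach N (a + c) (b + c)"
  by (induction rule: reach_induct) (auto intro: reach_fire_step fire_step_add)

lemma reach_transfer:
  assumes "\<And>t. t \<in> trans N \<Longrightarrow> t \<in> trans N' \<and> preset N' t = preset N t \<and> postset N' t = postset N t"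
    and "reach N a b"
  shows "reach N' a b"
  using assms(2)
proof (induction rule: reach_induct)
  case (step y z)
  then have "fire_step N' y z" using assms(1) unfolding fire_step_def by metis
  with step.IH show ?case by (rule reach_fire_step)
qed simp

lemma preset_subset_places: "petri_net N \<Longrightarrow> t \<in> trans N \<Longrightarrow> preset N t \<subseteq> places N"
  unfolding petri_net_def preset_def by auto

lemma postset_subset_places: "petri_net N \<Longrightarrow> t \<in> trans N \<Longrightarrow> postset N t \<subseteq> places N"
  unfolding petri_net_def postset_def by auto

lemma finite_postset: "petri_net N \<Longrightarrow> t \<in> trans N \<Longrightarrow> finite (postset N t)"
  using postset_subset_places petri_net_def finite_subset by metis

lemma fire_step_places:
  assumes "petri_net N" "set_mset a \<subseteq> places N" "fire_step N a b"
  shows "set_mset b \<subseteq> places N"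
proof -
  obtain t where t: "t \<in> trans N" "b = a - mset_set (preset N t) + mset_set (postset N t)"
    using assms(3) unfolding fire_step_def by blast
  have "set_mset b \<subseteq> set_mset a \<union> postset N t"
    using t(2) finite_postset[OF assms(1) t(1)] by (auto dest: in_diffD)
  with assms(2) postset_subset_places[OF assms(1) t(1)] show ?thesis by blast
qed

lemma fire_step_add_foreign:
  assumes "petri_net N" "set_mset C \<inter> places N = {}" "fire_step N (A + C) z"
  obtains A' where "fire_step N A A'" "z = A' + C"
proof -
  obtain t where t: "t \<in> trans N" "mset_set (preset N t) \<subseteq># A + C"
    "z = A + C - mset_set (preset N t) + mset_set (postset N t)"
    using assms(3) unfolding fire_step_def by blast
  have "count (mset_set (preset N t)) x \<le> count A x" for x
  proof (cases "x \<in> preset N t")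
    case True
    then have "count C x = 0"
      using assms(2) preset_subset_places[OF assms(1) t(1)] by (auto simp: count_eq_zero_iff)
    then show ?thesis using t(2) unfolding subseteq_mset_def by (metis add.right_neutral count_union)
  qed (simp add: count_mset_set(3))
  then have pre: "mset_set (preset N t) \<subseteq># A" by (simp add: subseteq_mset_def)
  then have "fire_step N A (A - mset_set (preset N t) + mset_set (postset N t))"
    using t(1) unfolding fire_step_def by blast
  moreover have "z = A - mset_set (preset N t) + mset_set (postset N t) + C"
    using pre t(3) by (metis subset_mset.diff_add_assoc2 union_commute union_assoc)
  ultimately show thesis by (rule that)
qed

lemma set_mset_repeat_mset_subset: "set_mset (repeat_mset n A) \<subseteq> set_mset A"
  by (metis count_eq_zero_iff count_repeat_mset mult_zero_right subsetI)

lemma reach_places: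
  assumes "petri_net N" "reach N a b" "set_mset a \<subseteq> places N"
  shows "set_mset b \<subseteq> places N"
  using assms(2,3) by (induction rule: reach_induct) (use fire_step_places[OF assms(1)] in blast)+

lemma flow_nodes: "petri_net N \<Longrightarrow> (x, y) \<in> flow N \<Longrightarrow> x \<in> nodes N \<and> y \<in> nodes N"
  unfolding petri_net_def nodes_def by auto

lemma pWF_preset_nonempty:
  assumes "pWF N" "t \<in> trans N"
  shows "preset N t \<noteq> {}"
proof -
  obtain i where i: "i \<in> inp N" "(i, t) \<in> (flow N)\<^sup>*"
    using assms unfolding pWF_def nodes_def by blast
  have "i \<noteq> t" using i(1) assms unfolding pWF_def petri_net_def by auto
  with i(2) show ?thesis unfolding preset_def by (cases rule: rtranclE) auto
qed

lemma pWF_reach_from_empty: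
  assumes "pWF N" "reach N {#} m"
  shows "m = {#}"
proof -
  have "\<not> fire_step N {#} z" for z
  proof
    assume "fire_step N {#} z"
    then obtain t where t: "t \<in> trans N" "mset_set (preset N t) = {#}"
      unfolding fire_step_def by (auto simp: subset_mset.le_zero_eq)
    have "finite (preset N t)"
      using preset_subset_places t(1) assms(1) finite_subset unfolding pWF_def petri_net_def by metis
    with t pWF_preset_nonempty[OF assms(1)] show False by (simp add: mset_set_empty_iff)
  qed
  with assms(2) show ?thesis unfolding reach_def by (cases rule: converse_rtranclpE) auto
qed

lemma infinite_UNIV_inj_avoiding:
  assumes "infinite (UNIV :: 'a set)" "finite A"
  obtains f :: "nat \<Rightarrow> 'a" where "inj f" "range f \<inter> A = {}"
proof -
  have "infinite (UNIV - A)" using assms by (simp add: Diff_infinite_finite)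
  then obtain f :: "nat \<Rightarrow> 'a" where "inj f" "range f \<subseteq> UNIV - A"
    using infinite_countable_subset by blast
  then show thesis using that by blast
qed

lemma not_sub_soundE:
  assumes "pWF N" "\<not> sub_sound N"
  obtains k k' m' where "0 < k" "k' \<le> k"
    "reach N (repeat_mset k (mset_set (inp N))) (m' + repeat_mset k' (mset_set (outp N)))"
    "\<not> reach N m' (repeat_mset (k - k') (mset_set (outp N)))"
proof -
  obtain k k' m' where kk: "k' \<le> k"
    and r: "reach N (repeat_mset k (mset_set (inp N))) (m' + repeat_mset k' (mset_set (outp N)))"
    and nr: "\<not> reach N m' (repeat_mset (k - k') (mset_set (outp N)))"
    using assms(2) unfolding sub_sound_def by blast
  have "k \<noteq> 0"
  proof
    assume "k = 0"
    with kk r have "m' = {#}" using pWF_reach_from_empty[OF assms(1)] by simp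
    with nr \<open>k = 0\<close> show False by simp
  qed
  with kk r nr that show thesis by blast
qed

lemma preset_subst_place_inner:
  assumes "petri_net X" "pWF Y" "nodes X \<inter> nodes Y = {}" "t \<in> trans Y"
  shows "preset (subst_place X p Y) t = preset Y t"
proof -
  have t: "t \<notin> nodes X" "t \<notin> inp Y"
    using assms unfolding nodes_def pWF_def petri_net_def by auto
  have "t \<notin> postset X p" "(y, t) \<notin> flow X" for y
    using t flow_nodes[OF assms(1)] unfolding postset_def by auto
  with t show ?thesis unfolding preset_def subst_place_def by auto
qed

lemma postset_subst_place_inner:
  assumes "petri_net X" "pWF Y" "nodes X \<inter> nodes Y = {}" "t \<in> trans Y"
  shows "postset (subst_place X p Y) t = postset Y t"
proof -
  have t: "t \<notin> nodes X" "t \<notin> outp Y"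
    using assms unfolding nodes_def pWF_def petri_net_def by auto
  have "t \<notin> preset X p" "(t, y) \<notin> flow X" for y
    using t flow_nodes[OF assms(1)] unfolding preset_def by auto
  with t show ?thesis unfolding postset_def subst_place_def by auto
qed

lemma preset_subst_place_outer:
  assumes "petri_net X" "pWF Y" "nodes X \<inter> nodes Y = {}" "t \<in> trans X" "p \<in> places X"
  shows "preset (subst_place X p Y) t = (preset X t - {p}) \<union> (if p \<in> preset X t then outp Y else {})"
proof -
  have t: "t \<notin> nodes Y" "t \<noteq> p" "t \<notin> inp Y"
    using assms unfolding nodes_def pWF_def petri_net_def by auto
  have pY: "petri_net Y" using assms(2) unfolding pWF_def by simp
  have "(y, t) \<notin> flow Y" for y
    using flow_nodes[OF pY] t(1) by blast
  with t show ?thesis unfolding preset_def postset_def subst_place_def by auto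
qed

lemma postset_subst_place_outer:
  assumes "petri_net X" "pWF Y" "nodes X \<inter> nodes Y = {}" "t \<in> trans X" "p \<in> places X"
  shows "postset (subst_place X p Y) t = (postset X t - {p}) \<union> (if p \<in> postset X t then inp Y else {})"
proof -
  have t: "t \<notin> nodes Y" "t \<noteq> p" "t \<notin> outp Y"
    using assms unfolding nodes_def pWF_def petri_net_def by auto
  have pY: "petri_net Y" using assms(2) unfolding pWF_def by simp
  have "(t, y) \<notin> flow Y" for y
    using flow_nodes[OF pY] t(1) by blast
  with t show ?thesis unfolding preset_def postset_def subst_place_def by auto
qed

locale chain_net =
  fixes f :: "nat \<Rightarrow> 'a" and k :: nat
  assumes inj_f: "inj f" and k_pos: "0 < k"
begin

definition q :: "nat \<Rightarrow> 'a" where "q j = f (3 * j)"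
definition tr :: "nat \<Rightarrow> 'a" where "tr j = f (3 * j + 1)"
definition buf :: 'a where "buf = f 2"

lemma chain_nodes_distinct [simp]:
  "q i = q j \<longleftrightarrow> i = j" "tr i = tr j \<longleftrightarrow> i = j" "q i \<noteq> tr j" "tr j \<noteq> q i"
  "q i \<noteq> buf" "buf \<noteq> q i" "tr i \<noteq> buf" "buf \<noteq> tr i"
  unfolding q_def tr_def buf_def inj_eq[OF inj_f] by presburger+

definition chain :: "'a pnet" where
  "chain = \<lparr> places = q ` {..2*k} \<union> {buf}, trans = tr ` {..<2*k},
     flow = (\<lambda>j. (q j, tr j)) ` {..<2*k} \<union> (\<lambda>j. (tr j, q (Suc j))) ` {..<2*k}
          \<union> (\<lambda>j. (tr j, buf)) ` {..<k} \<union> (\<lambda>j. (buf, tr j)) ` {k..<2*k},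
     inp = {q 0}, outp = {q (2*k)} \<rparr>"

lemma chain_flow:
  "j < 2*k \<Longrightarrow> (q j, tr j) \<in> flow chain" "j < 2*k \<Longrightarrow> (tr j, q (Suc j)) \<in> flow chain"
  "(tr 0, buf) \<in> flow chain" "(buf, tr k) \<in> flow chain"
  using k_pos by (auto simp: chain_def)

lemma chain_path: "i + d \<le> 2*k \<Longrightarrow> (q i, q (i + d)) \<in> (flow chain)\<^sup>*"
proof (induction d)
  case (Suc d)
  then have "(q i, q (i + d)) \<in> (flow chain)\<^sup>*" by simp
  also have "(q (i + d), tr (i + d)) \<in> flow chain" using Suc.prems chain_flow(1) by simp
  also have "(tr (i + d), q (i + Suc d)) \<in> flow chain" using Suc.prems chain_flow(2) by simp
  finally show ?case .
qed simp

lemma petri_net_chain: "petri_net chain"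
  unfolding petri_net_def chain_def by auto

lemma buf_in_places: "buf \<in> places chain"
  by (simp add: chain_def)

lemma pWF_chain: "pWF chain"
proof -
  have nodes: "nodes chain = q ` {..2*k} \<union> {buf} \<union> tr ` {..<2*k}"
    unfolding nodes_def chain_def by auto
  have from_q: "(q 0, q j) \<in> (flow chain)\<^sup>*" "(q j, q (2*k)) \<in> (flow chain)\<^sup>*" if "j \<le> 2*k" for j
    using chain_path[of 0 j] chain_path[of j "2*k - j"] that by simp_all
  have to_tr: "(q 0, tr j) \<in> (flow chain)\<^sup>*" if "j < 2*k" for j
    using from_q(1)[of j] chain_flow(1)[OF that] that by (simp add: rtrancl_into_rtrancl)
  have from_tr: "(tr j, q (2*k)) \<in> (flow chain)\<^sup>*" if "j < 2*k" for j
    using from_q(2)[of "Suc j"] chain_flow(2)[OF that] that by (simp add: converse_rtrancl_into_rtrancl)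
  have "(q 0, buf) \<in> (flow chain)\<^sup>*"
    using rtrancl_into_rtrancl[OF to_tr chain_flow(3)] k_pos by simp
  moreover have "(buf, q (2*k)) \<in> (flow chain)\<^sup>*"
    using converse_rtrancl_into_rtrancl[OF chain_flow(4) from_tr] k_pos by simp
  ultimately show ?thesis
    using petri_net_chain from_q to_tr from_tr unfolding pWF_def nodes by (auto simp: chain_def)
qed

definition pre_tr :: "nat \<Rightarrow> 'a multiset" where
  "pre_tr i = {#q i#} + (if k \<le> i then {#buf#} else {#})"

definition post_tr :: "nat \<Rightarrow> 'a multiset" where
  "post_tr i = {#q (Suc i)#} + (if i < k then {#buf#} else {#})"

lemma preset_chain_tr:
  "i < 2*k \<Longrightarrow> preset chain (tr i) = insert (q i) (if k \<le> i then {buf} else {})"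
  unfolding preset_def chain_def by auto

lemma postset_chain_tr:
  "i < 2*k \<Longrightarrow> postset chain (tr i) = insert (q (Suc i)) (if i < k then {buf} else {})"
  unfolding postset_def chain_def by auto

lemma fire_step_chain_iff:
  "fire_step chain M M' \<longleftrightarrow> (\<exists>i<2*k. pre_tr i \<subseteq># M \<and> M' = M - pre_tr i + post_tr i)"
proof -
  have "mset_set (preset chain (tr i)) = pre_tr i" "mset_set (postset chain (tr i)) = post_tr i"
    if "i < 2*k" for i
    using that unfolding preset_chain_tr[OF that] postset_chain_tr[OF that] pre_tr_def post_tr_def
    by auto
  then show ?thesis unfolding fire_step_def by (auto simp: chain_def)
qed

text \<open>A token on q_l has put min l (2k - l) net tokens on the buffer.\<close>

definition weight :: "nat \<Rightarrow> int" where
  "weight l = (if l \<le> k then int l else 2 * int k - int l)"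

definition balanced :: "'a multiset \<Rightarrow> bool" where
  "balanced M \<longleftrightarrow> set_mset M \<subseteq> places chain \<and>
     int (count M buf) = (\<Sum>l\<le>2*k. int (count M (q l)) * weight l)"

definition chain_tokens :: "'a multiset \<Rightarrow> nat" where
  "chain_tokens M = (\<Sum>l\<le>2*k. count M (q l))"

definition steps_left :: "'a multiset \<Rightarrow> nat" where
  "steps_left M = (\<Sum>l\<le>2*k. count M (q l) * (2*k - l))"

lemma count_after_fire:
  assumes "pre_tr i \<subseteq># M" "M' = M - pre_tr i + post_tr i"
  shows "int (count M' (q l)) = int (count M (q l)) - of_bool (l = i) + of_bool (l = Suc i)"
    and "int (count M' buf) = int (count M buf) - of_bool (k \<le> i) + of_bool (i < k)"
proof -
  have "count (pre_tr i) x \<le> count M x" for x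
    using assms(1) by (simp add: subseteq_mset_def)
  from this[of "q l"] this[of buf] show
    "int (count M' (q l)) = int (count M (q l)) - of_bool (l = i) + of_bool (l = Suc i)"
    "int (count M' buf) = int (count M buf) - of_bool (k \<le> i) + of_bool (i < k)"
    unfolding assms(2) pre_tr_def post_tr_def by auto
qed

lemma weighted_sum_after_fire:
  assumes "pre_tr i \<subseteq># M" "M' = M - pre_tr i + post_tr i" "i < 2*k"
  shows "(\<Sum>l\<le>2*k. int (count M' (q l)) * g l)
           = (\<Sum>l\<le>2*k. int (count M (q l)) * g l) - g i + g (Suc i)"
proof -
  have "(\<Sum>l\<le>2*k. int (count M' (q l)) * g l)
      = (\<Sum>l\<le>2*k. int (count M (q l)) * g l
                      - (if l = i then g l else 0) + (if l = Suc i then g l else 0))"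
    by (rule sum.cong) (auto simp: count_after_fire(1)[OF assms(1,2)] algebra_simps)
  also have "\<dots> = (\<Sum>l\<le>2*k. int (count M (q l)) * g l) - g i + g (Suc i)"
    using assms(3) by (simp add: sum.distrib sum_subtractf)
  finally show ?thesis .
qed

lemma fire_step_chain_balanced:
  assumes "balanced M" "fire_step chain M M'"
  shows "balanced M'" "chain_tokens M' = chain_tokens M" "steps_left M' < steps_left M"
proof -
  obtain i where i: "i < 2*k" "pre_tr i \<subseteq># M" "M' = M - pre_tr i + post_tr i"
    using assms(2) fire_step_chain_iff by blast
  note sum_after = weighted_sum_after_fire[OF i(2,3,1)]
  have "set_mset M' \<subseteq> set_mset M \<union> set_mset (post_tr i)"
    using i(3) by (auto dest: in_diffD)
  also have "\<dots> \<subseteq> places chain"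
    using assms(1) i(1) unfolding balanced_def post_tr_def chain_def by auto
  finally have "set_mset M' \<subseteq> places chain" .
  moreover have "weight (Suc i) - weight i = of_bool (i < k) - of_bool (k \<le> i)"
    using i(1) unfolding weight_def by auto
  ultimately show "balanced M'"
    using assms(1) sum_after[of weight] count_after_fire(2)[OF i(2,3)]
    unfolding balanced_def by auto
  show "chain_tokens M' = chain_tokens M"
    using sum_after[of "\<lambda>_. 1"] unfolding chain_tokens_def by (simp flip: of_nat_sum)
  have "int (2*k - Suc i) = int (2*k - i) - 1" using i(1) by simp
  then have "int (steps_left M') = int (steps_left M) - 1"
    unfolding steps_left_def of_nat_sum of_nat_mult using sum_after[of "\<lambda>l. int (2*k - l)"] by linarith
  then show "steps_left M' < steps_left M" by simp
qed

lemma reach_chain_balanced: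
  assumes "reach chain (replicate_mset n (q 0)) M"
  shows "balanced M \<and> chain_tokens M = n"
  using assms
proof (induction rule: reach_induct)
  case base
  have count: "count (replicate_mset n (q 0)) (q l) = (if l = 0 then n else 0)" for l
    by auto
  have "(\<Sum>l\<le>2*k. int (count (replicate_mset n (q 0)) (q l)) * weight l) = 0"
    unfolding count by (intro sum.neutral) (auto simp: weight_def)
  then show ?case
    unfolding balanced_def chain_tokens_def count by (auto simp: chain_def)
qed (use fire_step_chain_balanced in blast)

text \<open>
  Tokens on q_0, ..., q_(k-1) can always move; a token on q_i with k \<le> i has weight at
  least 1, so the balance equation guarantees a token on the buffer.
\<close>

lemma balanced_enabled:
  assumes "balanced M" "i < 2*k" "0 < count M (q i)"
  shows "\<exists>j<2*k. pre_tr j \<subseteq># M"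
proof (cases "\<exists>j<k. 0 < count M (q j)")
  case True
  then obtain j where "j < k" "0 < count M (q j)" by blast
  then have "pre_tr j \<subseteq># M" by (simp add: pre_tr_def)
  with \<open>j < k\<close> show ?thesis by (intro exI[of _ j]) auto
next
  case False
  with assms(3) have "k \<le> i" by (meson not_le)
  have "int (count M (q i)) * weight i \<le> (\<Sum>l\<le>2*k. int (count M (q l)) * weight l)"
    by (rule member_le_sum) (use assms(2) in \<open>auto simp: weight_def\<close>)
  moreover have "1 \<le> weight i" using \<open>k \<le> i\<close> assms(2) k_pos unfolding weight_def by auto
  ultimately have "0 < count M buf"
    using assms(1,3) unfolding balanced_def by (smt (verit) mult_le_cancel_left1 of_nat_0_less_iff)
  with \<open>k \<le> i\<close> assms(3) have "pre_tr i \<subseteq># M"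
    by (auto simp: pre_tr_def subseteq_mset_def)
  with assms(2) show ?thesis by blast
qed

lemma balanced_final:
  assumes "balanced M" "\<forall>i<2*k. count M (q i) = 0"
  shows "M = replicate_mset (chain_tokens M) (q (2*k))"
proof -
  have "chain_tokens M = count M (q (2*k))"
    "(\<Sum>l\<le>2*k. int (count M (q l)) * weight l) = 0"
    using assms(2) by (simp_all add: chain_tokens_def lessThan_Suc_atMost[symmetric] weight_def)
  with assms(1) have "count M buf = 0" "set_mset M \<subseteq> places chain"
    unfolding balanced_def by simp_all
  have "set_mset M \<subseteq> {q (2*k)}"
  proof
    fix x assume "x \<in># M"
    with \<open>count M buf = 0\<close> \<open>set_mset M \<subseteq> places chain\<close> obtain j where "j \<le> 2*k" "x = q j"
      by (auto simp: chain_def count_eq_zero_iff)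
    with assms(2) \<open>x \<in># M\<close> show "x \<in> {q (2*k)}"
      by (metis count_eq_zero_iff le_neq_implies_less singletonI)
  qed
  with \<open>chain_tokens M = count M (q (2*k))\<close> show ?thesis
    by (auto simp: multiset_eq_iff count_eq_zero_iff)
qed

lemma balanced_reach_final:
  assumes "balanced M"
  shows "reach chain M (replicate_mset (chain_tokens M) (q (2*k)))"
  using assms
proof (induction "steps_left M" arbitrary: M rule: less_induct)
  case less
  show ?case
  proof (cases "\<exists>i<2*k. 0 < count M (q i)")
    case True
    then obtain i where "i < 2*k" "pre_tr i \<subseteq># M"
      using balanced_enabled less.prems by blast
    then have step: "fire_step chain M (M - pre_tr i + post_tr i)"
      using fire_step_chain_iff by blast
    note inv = fire_step_chain_balanced[OF less.prems step]
    have "reach chain (M - pre_tr i + post_tr i) (replicate_mset (chain_tokens M) (q (2*k)))"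
      using less.hyps[OF inv(3) inv(1)] inv(2) by simp
    with step show ?thesis by (blast intro: reach_trans fire_step_reach)
  next
    case False
    then have "M = replicate_mset (chain_tokens M) (q (2*k))"
      using balanced_final[OF less.prems] by (auto simp: count_eq_zero_iff)
    then show ?thesis by (metis reach_refl)
  qed
qed

lemma balanced_plus_final:
  "balanced (M + replicate_mset n (q (2*k))) \<longleftrightarrow> balanced M"
proof -
  have "(\<Sum>l\<le>2*k. int (count (M + replicate_mset n (q (2*k))) (q l)) * weight l)
      = (\<Sum>l\<le>2*k. int (count M (q l)) * weight l)"
    by (rule sum.cong) (auto simp: weight_def)
  then show ?thesis unfolding balanced_def by (auto simp: chain_def)
qed

lemma chain_tokens_plus_final:
  "chain_tokens (M + replicate_mset n (q (2*k))) = chain_tokens M + n"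
  unfolding chain_tokens_def by (simp add: sum.distrib)

lemma sub_sound_chain: "sub_sound chain"
  unfolding sub_sound_def
proof (intro allI impI)
  fix n n' m
  assume "n' \<le> n" and "reach chain (repeat_mset n (mset_set (inp chain)))
      (m + repeat_mset n' (mset_set (outp chain)))"
  then have "reach chain (replicate_mset n (q 0)) (m + replicate_mset n' (q (2*k)))"
    by (simp add: chain_def)
  then have "balanced m" "chain_tokens m = n - n'"
    using reach_chain_balanced balanced_plus_final chain_tokens_plus_final by fastforce+
  moreover have "repeat_mset (n - n') (mset_set (outp chain)) = replicate_mset (n - n') (q (2*k))"
    by (simp add: chain_def)
  ultimately show "reach chain m (repeat_mset (n - n') (mset_set (outp chain)))"
    using balanced_reach_final[of m] by simp
qed

end

locale chain_subst = chain_net +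
  fixes N :: "'a pnet"
  assumes pWF_N: "pWF N" and fresh: "range f \<inter> nodes N = {}"
begin

abbreviation chain_N :: "'a pnet" where "chain_N \<equiv> subst_place chain buf N"

lemma petri_net_N: "petri_net N"
  using pWF_N unfolding pWF_def by simp

lemma inp_N: "inp N \<subseteq> places N" "finite (inp N)"
  using pWF_N finite_subset unfolding pWF_def petri_net_def by auto

lemma outp_N: "outp N \<subseteq> places N" "finite (outp N)"
  using pWF_N finite_subset unfolding pWF_def petri_net_def by auto

lemma q_notin_places_N: "q j \<notin> places N"
  using fresh unfolding q_def nodes_def by auto

lemma nodes_chain_disjoint: "nodes chain \<inter> nodes N = {}"
  using fresh unfolding nodes_def chain_def q_def tr_def buf_def by auto

lemma inp_chain_N: "inp chain_N = {q 0}"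
  unfolding subst_place_def chain_def by auto

lemma outp_chain_N: "outp chain_N = {q (2*k)}"
  unfolding subst_place_def chain_def by auto

definition pre_subst_tr :: "nat \<Rightarrow> 'a multiset" where
  "pre_subst_tr i = {#q i#} + (if k \<le> i then mset_set (outp N) else {#})"

definition post_subst_tr :: "nat \<Rightarrow> 'a multiset" where
  "post_subst_tr i = {#q (Suc i)#} + (if i < k then mset_set (inp N) else {#})"

lemma mset_preset_chain_N_tr:
  assumes "i < 2*k"
  shows "mset_set (preset chain_N (tr i)) = pre_subst_tr i"
proof -
  have "tr i \<in> trans chain" using assms by (simp add: chain_def)
  then have "preset chain_N (tr i) = insert (q i) (if k \<le> i then outp N else {})"
    using preset_subst_place_outer[OF petri_net_chain pWF_N nodes_chain_disjoint _ buf_in_places]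
      preset_chain_tr[OF assms] by auto
  moreover have "q i \<notin> outp N" using q_notin_places_N outp_N by blast
  ultimately show ?thesis unfolding pre_subst_tr_def using outp_N by auto
qed

lemma mset_postset_chain_N_tr:
  assumes "i < 2*k"
  shows "mset_set (postset chain_N (tr i)) = post_subst_tr i"
proof -
  have "tr i \<in> trans chain" using assms by (simp add: chain_def)
  then have "postset chain_N (tr i) = insert (q (Suc i)) (if i < k then inp N else {})"
    using postset_subst_place_outer[OF petri_net_chain pWF_N nodes_chain_disjoint _ buf_in_places]
      postset_chain_tr[OF assms] by auto
  moreover have "q (Suc i) \<notin> inp N" using q_notin_places_N inp_N by blast
  ultimately show ?thesis unfolding post_subst_tr_def using inp_N by auto
qed

lemma trans_chain_N: "trans chain_N = tr ` {..<2*k} \<union> trans N"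
  unfolding subst_place_def chain_def by auto

lemma fire_step_chain_N_tr:
  "i < 2*k \<Longrightarrow> pre_subst_tr i \<subseteq># M \<Longrightarrow> fire_step chain_N M (M - pre_subst_tr i + post_subst_tr i)"
  unfolding fire_step_def trans_chain_N
  using mset_preset_chain_N_tr mset_postset_chain_N_tr by (metis UnI1 image_eqI lessThan_iff)

lemma trans_N_in_chain_N:
  assumes "t \<in> trans N"
  shows "t \<in> trans chain_N" "preset chain_N t = preset N t" "postset chain_N t = postset N t"
  using assms trans_chain_N
    preset_subst_place_inner[OF petri_net_chain pWF_N nodes_chain_disjoint assms]
    postset_subst_place_inner[OF petri_net_chain pWF_N nodes_chain_disjoint assms] by auto

lemma fire_step_chain_NE:
  assumes "fire_step chain_N M M'"
  obtains "fire_step N M M'"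
  | i where "i < 2*k" "pre_subst_tr i \<subseteq># M" "M' = M - pre_subst_tr i + post_subst_tr i"
proof -
  obtain t where t: "t \<in> trans chain_N" "mset_set (preset chain_N t) \<subseteq># M"
    "M' = M - mset_set (preset chain_N t) + mset_set (postset chain_N t)"
    using assms unfolding fire_step_def by blast
  show thesis
  proof (cases "t \<in> trans N")
    case True
    with t have "fire_step N M M'" unfolding fire_step_def by (auto simp: trans_N_in_chain_N)
    then show thesis by (rule that(1))
  next
    case False
    with t(1) obtain i where "i < 2*k" "t = tr i" unfolding trans_chain_N by auto
    with t show thesis
      using that(2) mset_preset_chain_N_tr mset_postset_chain_N_tr by auto
  qed
qed

lemma reach_N_imp_reach_chain_N: "reach N a b \<Longrightarrow> reach chain_N a b"
  by (rule reach_transfer) (simp_all add: trans_N_in_chain_N)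

lemma reach_chain_N_fill:
  "j \<le> k \<Longrightarrow> reach chain_N {#q 0#} ({#q j#} + repeat_mset j (mset_set (inp N)))"
proof (induction j)
  case (Suc j)
  let ?M = "{#q j#} + repeat_mset j (mset_set (inp N))"
  have "pre_subst_tr j = {#q j#}" "post_subst_tr j = {#q (Suc j)#} + mset_set (inp N)"
    using Suc.prems unfolding pre_subst_tr_def post_subst_tr_def by simp_all
  moreover have "fire_step chain_N ?M (?M - pre_subst_tr j + post_subst_tr j)"
    using Suc.prems by (intro fire_step_chain_N_tr) (simp_all add: \<open>pre_subst_tr j = {#q j#}\<close>)
  ultimately have "fire_step chain_N ?M ({#q (Suc j)#} + repeat_mset (Suc j) (mset_set (inp N)))"
    by (simp add: ac_simps)
  with Suc show ?case by (auto intro: reach_fire_step)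
qed simp

lemma reach_chain_N_drain:
  assumes "j \<le> k'" "k' \<le> k"
  shows "reach chain_N (m + repeat_mset k' (mset_set (outp N)) + {#q k#})
           (m + repeat_mset (k' - j) (mset_set (outp N)) + {#q (k + j)#})"
  using assms(1)
proof (induction j)
  case (Suc j)
  let ?R = "m + repeat_mset (k' - Suc j) (mset_set (outp N))"
  have "k' - j = Suc (k' - Suc j)" using Suc.prems by simp
  then have eq: "m + repeat_mset (k' - j) (mset_set (outp N)) + {#q (k + j)#} = ?R + pre_subst_tr (k + j)"
    unfolding pre_subst_tr_def by (simp add: ac_simps)
  from Suc have "reach chain_N (m + repeat_mset k' (mset_set (outp N)) + {#q k#})
      (m + repeat_mset (k' - j) (mset_set (outp N)) + {#q (k + j)#})"
    by simp
  then have "reach chain_N (m + repeat_mset k' (mset_set (outp N)) + {#q k#}) (?R + pre_subst_tr (k + j))"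
    unfolding eq .
  moreover have "fire_step chain_N (?R + pre_subst_tr (k + j)) (?R + {#q (k + Suc j)#})"
    using fire_step_chain_N_tr[of "k + j" "?R + pre_subst_tr (k + j)"] Suc.prems assms(2)
    by (simp add: post_subst_tr_def)
  ultimately show ?case by (rule reach_fire_step)
qed simp

lemma reach_chain_N_witness:
  assumes "k' \<le> k"
    and "reach N (repeat_mset k (mset_set (inp N))) (m + repeat_mset k' (mset_set (outp N)))"
  shows "reach chain_N {#q 0#} (m + {#q (k + k')#})"
proof -
  have "reach chain_N {#q 0#} (repeat_mset k (mset_set (inp N)) + {#q k#})"
    using reach_chain_N_fill[of k] by (simp add: ac_simps)
  also have "reach chain_N \<dots> (m + repeat_mset k' (mset_set (outp N)) + {#q k#})"
    using reach_add[OF reach_N_imp_reach_chain_N[OF assms(2)]] .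
  also have "reach chain_N \<dots> (m + {#q (k + k')#})"
    using reach_chain_N_drain[of k' k' m] assms(1) by simp
  finally show ?thesis .
qed

text \<open>
  From m + q_(k+k') the chain token can advance only by consuming copies of O, so every
  reachable marking is m run forward in N, minus the copies of O consumed, plus that token.
\<close>

lemma reach_chain_N_from_witness:
  assumes "set_mset m \<subseteq> places N" "k' \<le> k" "reach chain_N (m + {#q (k + k')#}) M"
  shows "\<exists>j A. k + k' \<le> j \<and> j \<le> 2*k \<and> M = A + {#q j#} \<and> set_mset A \<subseteq> places N \<and>
           reach N m (A + repeat_mset (j - (k + k')) (mset_set (outp N)))"
  using assms(3)
proof (induction rule: reach_induct)
  case base
  with assms(1,2) show ?case by (intro exI[of _ "k + k'"] exI[of _ m]) auto
next
  case (step y z)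
  let ?O = "mset_set (outp N)"
  from step.IH obtain j A where jA: "k + k' \<le> j" "j \<le> 2*k" "y = A + {#q j#}"
    "set_mset A \<subseteq> places N" "reach N m (A + repeat_mset (j - (k + k')) ?O)"
    by blast
  from step.hyps(2) show ?case
  proof (cases rule: fire_step_chain_NE)
    case 1
    have "set_mset {#q j#} \<inter> places N = {}" using q_notin_places_N by simp
    with 1 jA(3) obtain A' where A': "fire_step N A A'" "z = A' + {#q j#}"
      using fire_step_add_foreign[OF petri_net_N] by metis
    have "set_mset A' \<subseteq> places N" using fire_step_places[OF petri_net_N jA(4) A'(1)] .
    moreover have "reach N m (A' + repeat_mset (j - (k + k')) ?O)"
      using reach_fire_step[OF jA(5) fire_step_add[OF A'(1)]] .
    ultimately show ?thesis using jA(1,2) A'(2) by blast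
  next
    case (2 i)
    have "q i \<in># pre_subst_tr i" by (simp add: pre_subst_tr_def)
    with 2(2) jA(3) have "q i \<in># A + {#q j#}" by (metis mset_subset_eqD)
    with jA(4) q_notin_places_N have "i = j" by auto
    with jA(1) have pre: "pre_subst_tr i = {#q j#} + ?O" and post: "post_subst_tr i = {#q (Suc j)#}"
      unfolding pre_subst_tr_def post_subst_tr_def by auto
    with 2(2) jA(3) have "?O \<subseteq># A" by simp
    define A' where "A' = A - ?O"
    have "A' + ?O = A" using \<open>?O \<subseteq># A\<close> unfolding A'_def by simp
    have "z = A' + {#q (Suc j)#}" using 2(3) pre post jA(3) unfolding A'_def by simp
    moreover have "set_mset A' \<subseteq> places N" using jA(4) unfolding A'_def by (auto dest: in_diffD)
    moreover have "A' + repeat_mset (Suc j - (k + k')) ?O = A + repeat_mset (j - (k + k')) ?O"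
      using \<open>A' + ?O = A\<close> jA(1) by (simp add: Suc_diff_le flip: union_assoc)
    ultimately show ?thesis using jA(1,5) 2(1) \<open>i = j\<close> by (intro exI[of _ "Suc j"] exI[of _ A']) auto
  qed
qed

lemma not_one_sound_chain_N:
  assumes "k' \<le> k"
    and "reach N (repeat_mset k (mset_set (inp N))) (m + repeat_mset k' (mset_set (outp N)))"
    and "\<not> reach N m (repeat_mset (k - k') (mset_set (outp N)))"
  shows "\<not> k_sound 1 chain_N"
proof
  assume "k_sound 1 chain_N"
  with reach_chain_N_witness[OF assms(1,2)] have "reach chain_N (m + {#q (k + k')#}) {#q (2*k)#}"
    unfolding k_sound_def inp_chain_N outp_chain_N by simp
  moreover have "set_mset m \<subseteq> places N"
    using reach_places[OF petri_net_N assms(2)] set_mset_repeat_mset_subset inp_N by fastforce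
  ultimately obtain j A where "k + k' \<le> j" "j \<le> 2*k" "{#q (2*k)#} = A + {#q j#}"
    "reach N m (A + repeat_mset (j - (k + k')) (mset_set (outp N)))"
    using reach_chain_N_from_witness assms(1) by blast
  moreover from this have "A = {#}" "j = 2*k" by (auto simp: add_mset_eq_single)
  ultimately show False using assms(3) by (simp add: mult_2)
qed

end

theorem mainTheorem5:
  assumes "infinite (UNIV :: 'a set)"
  shows "\<not> (\<exists>C :: 'a pnet set.
            (\<forall>N \<in> C. pWF N) \<and>
            (\<forall>N. pWF N \<and> sub_sound N \<longrightarrow> N \<in> C) \<and>
            (\<exists>N \<in> C. \<not> sub_sound N) \<and>
            (\<forall>N \<in> C. k_sound 1 N) \<and>
            (\<forall>N \<in> C. \<forall>M \<in> C. \<forall>p. nodes N \<inter> nodes M = {} \<and> p \<in> places N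
                \<longrightarrow> subst_place N p M \<in> C))"
proof (intro notI, elim exE conjE)
  fix C :: "'a pnet set"
  assume pWF_C: "\<forall>N \<in> C. pWF N"
    and sub_sound_C: "\<forall>N. pWF N \<and> sub_sound N \<longrightarrow> N \<in> C"
    and unsound_C: "\<exists>N \<in> C. \<not> sub_sound N"
    and sound_C: "\<forall>N \<in> C. k_sound 1 N"
    and closed_C: "\<forall>N \<in> C. \<forall>M \<in> C. \<forall>p. nodes N \<inter> nodes M = {} \<and> p \<in> places N
                     \<longrightarrow> subst_place N p M \<in> C"
  from unsound_C pWF_C obtain N where N: "N \<in> C" "\<not> sub_sound N" "pWF N" by blast
  from N(3,2) obtain k k' m where witness: "0 < k" "k' \<le> k"
    "reach N (repeat_mset k (mset_set (inp N))) (m + repeat_mset k' (mset_set (outp N)))"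
    "\<not> reach N m (repeat_mset (k - k') (mset_set (outp N)))"
    by (rule not_sub_soundE)
  have "finite (nodes N)"
    using N(3) unfolding pWF_def petri_net_def nodes_def by simp
  then obtain f :: "nat \<Rightarrow> 'a" where "inj f" "range f \<inter> nodes N = {}"
    using infinite_UNIV_inj_avoiding[OF assms] by metis
  with witness(1) N(3) interpret chain_subst f k N
    by unfold_locales
  have "chain \<in> C" using sub_sound_C pWF_chain sub_sound_chain by simp
  then have "chain_N \<in> C" using closed_C N(1) nodes_chain_disjoint buf_in_places by simp
  then show False using sound_C not_one_sound_chain_N[OF witness(2-4)] by simp
qed

end
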